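(* Let $G$ be the central product of normal subgroups $H,K$ ($G=HK$, $[H,K]=1$), $A=H\cap K$, $Z=H'\cap K'$, $D$ a divisible abelian group with trivial action. Put $\bar G=G/Z$, $\bar H=H/Z$, $\bar K=K/Z$, $\bar A=A/Z$ (so $\bar G$ is the central product of $\bar H,\bar K$ with $\bar H\cap\bar K=\bar A$). Let $\xi\in\operatorname{H}^2(\bar G,D)$ with $\theta'(\xi)=(\xi_1,\xi_2,t)$, where $\theta'=(\operatorname{res}^{\bar G}_{\bar H},\operatorname{res}^{\bar G}_{\bar K},\nu)$ as in the context, and suppose that $\operatorname{res}^{\bar H}_{\bar A}(\xi_1)=0$ or $\operatorname{res}^{\bar K}_{\bar A}(\xi_2)=0$. Then the following are equivalent: (i) $\xi$ lies in the image of the inflation map $\operatorname{H}^2(\bar G/\bar A,D)\to\operatorname{H}^2(\bar G,D)$; (ii) $\mu^*(t)=0$; (iii) $\psi_{\bar H}(\xi_1)=0$ and $\psi_{\bar K}(\xi_2)=0$.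
   Context: $X\otimes Y$ denotes the abelian tensor product $X/X'\otimes_{\mathbb{Z}}Y/Y'$; $D$ is written additively and classes are represented by 2-cocycles $f$. For $\xi\in\operatorname{H}^2(\bar G,D)$ represented by $f$, $\nu(\xi)\in\operatorname{Hom}(\bar H\otimes\bar K,D)$ is $\nu(\xi)(h\bar H'\otimes k\bar K')=f(h,k)-f(k,h)$. For a group $X$ with central subgroup $\bar A$, $\psi_X:\operatorname{H}^2(X,D)\to\operatorname{Hom}(X\otimes\bar A,D)$ is defined by $\psi_X(\zeta)(xX'\otimes a)=f(x,a)-f(a,x)$ for $x\in X$, $a\in\bar A$, where $f$ represents $\zeta$. The map $\mu^*:\operatorname{Hom}(\bar H\otimes\bar K,D)\to\operatorname{Hom}(\bar H\otimes\bar A,D)\oplus\operatorname{Hom}(\bar K\otimes\bar A,D)$ is $\mu^*(t)=(t_1,t_2)$ with $t_1(h\bar H'\otimes a)=t(h\bar H'\otimes a\bar K')$ and $t_2(k\bar K'\otimes a)=t(a\bar H'\otimes k\bar K')$ for $h\in\bar H$, $k\in\bar K$, $a\in\bar A$. *)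

theory Defs
  imports "HOL-Algebra.Algebra"
begin

definition divisible_ab :: "'d::ab_group_add itself \<Rightarrow> bool" where
  "divisible_ab _ \<longleftrightarrow> (\<forall>(x::'d) (n::nat). n > 0 \<longrightarrow> (\<exists>y::'d. (\<Sum>i<n. y) = x))"

text \<open>Inhomogeneous 2-cocycles and 2-coboundaries of a group X with coefficients in D
  (trivial action); only values on the carrier matter.\<close>
definition cocycle2 :: "('g,'m) monoid_scheme \<Rightarrow> ('g \<Rightarrow> 'g \<Rightarrow> 'd::ab_group_add) \<Rightarrow> bool" where
  "cocycle2 Q f \<longleftrightarrow> (\<forall>x\<in>carrier Q. \<forall>y\<in>carrier Q. \<forall>z\<in>carrier Q.
      f y z - f (x \<otimes>\<^bsub>Q\<^esub> y) z + f x (y \<otimes>\<^bsub>Q\<^esub> z) - f x y = 0)"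

definition coboundary2 :: "('g,'m) monoid_scheme \<Rightarrow> ('g \<Rightarrow> 'g \<Rightarrow> 'd::ab_group_add) \<Rightarrow> bool" where
  "coboundary2 Q f \<longleftrightarrow> (\<exists>c::'g \<Rightarrow> 'd. \<forall>x\<in>carrier Q. \<forall>y\<in>carrier Q.
      f x y = c y - c (x \<otimes>\<^bsub>Q\<^esub> y) + c x)"

definition cohomologous2 :: "('g,'m) monoid_scheme \<Rightarrow> ('g \<Rightarrow> 'g \<Rightarrow> 'd::ab_group_add)
    \<Rightarrow> ('g \<Rightarrow> 'g \<Rightarrow> 'd) \<Rightarrow> bool" where
  "cohomologous2 Q f g \<longleftrightarrow> coboundary2 Q (\<lambda>x y. f x y - g x y)"

definition res_zero :: "('g,'m) monoid_scheme \<Rightarrow> 'g set \<Rightarrow> ('g \<Rightarrow> 'g \<Rightarrow> 'd::ab_group_add) \<Rightarrow> bool" where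
  "res_zero Q S f \<longleftrightarrow> coboundary2 (Q\<lparr>carrier := S\<rparr>) f"

definition in_image_inflation :: "('g,'m) monoid_scheme \<Rightarrow> 'g set \<Rightarrow> ('g \<Rightarrow> 'g \<Rightarrow> 'd::ab_group_add) \<Rightarrow> bool" where
  "in_image_inflation Q N f \<longleftrightarrow> (\<exists>g :: 'g set \<Rightarrow> 'g set \<Rightarrow> 'd. cocycle2 (Q Mod N) g \<and>
      cohomologous2 Q f (\<lambda>x y. g (N #>\<^bsub>Q\<^esub> x) (N #>\<^bsub>Q\<^esub> y)))"

text \<open>Elements of Hom(X/X' \<otimes> Y/Y', D) are represented by their values on pure tensors
  (x X' \<otimes> y Y'), i.e. as functions of two arguments; such a homomorphism is zero iff it
  vanishes on all pure tensors.\<close>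
definition hom_tensor_zero :: "'x set \<Rightarrow> 'y set \<Rightarrow> ('x \<Rightarrow> 'y \<Rightarrow> 'd::zero) \<Rightarrow> bool" where
  "hom_tensor_zero Q W t \<longleftrightarrow> (\<forall>x\<in>Q. \<forall>y\<in>W. t x y = 0)"

definition nu_map :: "('g \<Rightarrow> 'g \<Rightarrow> 'd::ab_group_add) \<Rightarrow> 'g \<Rightarrow> 'g \<Rightarrow> 'd" where
  "nu_map f = (\<lambda>h k. f h k - f k h)"

definition psi_map :: "('g \<Rightarrow> 'g \<Rightarrow> 'd::ab_group_add) \<Rightarrow> 'g \<Rightarrow> 'g \<Rightarrow> 'd" where
  "psi_map f = (\<lambda>x a. f x a - f a x)"

definition mu_star :: "('g \<Rightarrow> 'g \<Rightarrow> 'd) \<Rightarrow> ('g \<Rightarrow> 'g \<Rightarrow> 'd) \<times> ('g \<Rightarrow> 'g \<Rightarrow> 'd)" where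
  "mu_star t = ((\<lambda>h a. t h a), (\<lambda>k a. t a k))"

definition Zc :: "('a,'m) monoid_scheme \<Rightarrow> 'a set \<Rightarrow> 'a set \<Rightarrow> 'a set" where
  "Zc G H K = derived G H \<inter> derived G K"

definition qbar :: "('a,'m) monoid_scheme \<Rightarrow> 'a set \<Rightarrow> 'a set \<Rightarrow> 'a set set" where
  "qbar G N T = (\<lambda>s. N #>\<^bsub>G\<^esub> s) ` T"

end

theory Submission
  imports Defs
begin

(* If N is a central subgroup of X and the cocycle f is a coboundary on N, then f is inflated
   from X/N exactly when f x a = f a x for all x in X and a in N.  An inflated cocycle
   g(Nx, Ny) satisfies g(Nx, N) = g(N, N) = g(N, Nx) by the cocycle identity, and coboundaries
   are symmetric on commuting pairs.  Conversely, subtract a coboundary so that f vanishes on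
   N x N, write x = t(x) r(x) with t constant on N-cosets and r(x) in N, and subtract the
   coboundary of c(x) = -f(t x, r x): the result vanishes whenever one argument lies in N, so it
   is constant on N-cosets and descends to X/N.
   For X = G/Z and N = (H \<inter> K)/Z, central because [H, K] = 1, the symmetry condition is
   psi_X(f) = 0.  The cocycle identity makes x \<mapsto> f x a - f a x a homomorphism, and
   X = (H/Z)(K/Z), so it suffices to check it on H/Z and K/Z, which is what (ii) and (iii) say. *)

context group
begin

lemma cocycle2_minus_coboundary:
  assumes "cocycle2 G f"
  shows "cocycle2 G (\<lambda>x y. f x y - (c y - c (x \<otimes> y) + c x))"
  using assms unfolding cocycle2_def by (simp add: m_assoc algebra_simps)

lemma cocycle2_commutator_mult:
  fixes f :: "'a \<Rightarrow> 'a \<Rightarrow> 'd::ab_group_add"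
  assumes f: "cocycle2 G f" and a: "a \<in> carrier G" and central: "\<And>x. x \<in> carrier G \<Longrightarrow> a \<otimes> x = x \<otimes> a"
    and x: "x \<in> carrier G" and y: "y \<in> carrier G"
  shows "f (x \<otimes> y) a - f a (x \<otimes> y) = (f x a - f a x) + (f y a - f a y)"
proof -
  have "f y a - f (x \<otimes> y) a + f x (y \<otimes> a) - f x y = 0"
    and "f a y - f (x \<otimes> a) y + f x (a \<otimes> y) - f x a = 0"
    and "f x y - f (a \<otimes> x) y + f a (x \<otimes> y) - f a x = 0"
    using f a x y unfolding cocycle2_def by blast+
  moreover have "f (x \<otimes> y) a - f a (x \<otimes> y) - ((f x a - f a x) + (f y a - f a y))
    = - (f y a - f (x \<otimes> y) a + f x (y \<otimes> a) - f x y)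
      + (f a y - f (x \<otimes> a) y + f x (a \<otimes> y) - f x a)
      - (f x y - f (a \<otimes> x) y + f a (x \<otimes> y) - f a x)"
    using central x y by (simp add: algebra_simps)
  ultimately show ?thesis by simp
qed

lemma central_subgroup_normal:
  assumes N: "subgroup N G" and central: "\<And>a x. \<lbrakk>a \<in> N; x \<in> carrier G\<rbrakk> \<Longrightarrow> a \<otimes> x = x \<otimes> a"
  shows "N \<lhd> G"
proof -
  have "x \<otimes> a \<otimes> inv x \<in> N" if x: "x \<in> carrier G" and a: "a \<in> N" for x a
  proof -
    have "x \<otimes> a \<otimes> inv x = a \<otimes> x \<otimes> inv x" using central[OF a x] by simp
    also have "\<dots> = a" using x subgroup.mem_carrier[OF N a] by (simp add: m_assoc)
    finally show ?thesis using a by simp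
  qed
  then show ?thesis using N normal_inv_iff by blast
qed

lemma central_product_inter_central:
  assumes HK: "H <#> K = carrier G" and H: "H \<subseteq> carrier G" and K: "K \<subseteq> carrier G"
    and commute: "\<forall>h\<in>H. \<forall>k\<in>K. h \<otimes> k = k \<otimes> h"
    and a: "a \<in> H \<inter> K" and x: "x \<in> carrier G"
  shows "a \<otimes> x = x \<otimes> a"
proof -
  obtain h k where hk: "h \<in> H" "k \<in> K" "x = h \<otimes> k"
    using x HK unfolding set_mult_def by blast
  have ac: "a \<in> carrier G" and hc: "h \<in> carrier G" and kc: "k \<in> carrier G"
    using a hk H K by auto
  have "a \<otimes> x = (a \<otimes> h) \<otimes> k" using hk ac hc kc by (simp add: m_assoc)
  also have "\<dots> = (h \<otimes> a) \<otimes> k" using commute hk(1) a by simp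
  also have "\<dots> = h \<otimes> (a \<otimes> k)" using ac hc kc by (simp add: m_assoc)
  also have "\<dots> = h \<otimes> (k \<otimes> a)" using commute[rule_format, of a k] hk(2) a by simp
  also have "\<dots> = x \<otimes> a" using hk ac hc kc by (simp add: m_assoc)
  finally show ?thesis .
qed

lemma rcoset_some_elem:
  assumes "subgroup N G" and "x \<in> carrier G"
  obtains a where "a \<in> N" and "(SOME y. y \<in> N #> x) = a \<otimes> x"
proof -
  have "(SOME y. y \<in> N #> x) \<in> N #> x"
    using rcos_self[OF assms(2,1)] by (rule someI)
  then show ?thesis using that unfolding r_coset_def by blast
qed

lemma central_subgroup_section:
  assumes N: "subgroup N G" and central: "\<And>a x. \<lbrakk>a \<in> N; x \<in> carrier G\<rbrakk> \<Longrightarrow> a \<otimes> x = x \<otimes> a"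
  obtains t r where "\<And>x. x \<in> carrier G \<Longrightarrow> t x \<in> carrier G \<and> r x \<in> N \<and> t x \<otimes> r x = x"
    and "\<And>x a. \<lbrakk>x \<in> carrier G; a \<in> N\<rbrakk> \<Longrightarrow> t (x \<otimes> a) = t x \<and> r (x \<otimes> a) = r x \<otimes> a"
    and "\<And>a. a \<in> N \<Longrightarrow> t a \<in> N"
proof -
  interpret N: subgroup N G by (rule N)
  define t where "t x = (SOME y. y \<in> N #> x)" for x
  define r where "r x = inv (t x) \<otimes> x" for x
  have tr: "t x \<in> carrier G \<and> r x \<in> N \<and> t x \<otimes> r x = x" if x: "x \<in> carrier G" for x
  proof -
    obtain b where b: "b \<in> N" "t x = b \<otimes> x"
      using rcoset_some_elem[OF N x] unfolding t_def by blast
    have bc: "b \<in> carrier G" using b N.mem_carrier by blast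
    have "r x = inv x \<otimes> (inv b \<otimes> x)"
      unfolding r_def b(2) using x bc by (simp add: inv_mult_group m_assoc)
    also have "\<dots> = inv b"
      using central[of "inv b" x] b x bc by (simp add: m_assoc[symmetric])
    finally have "r x = inv b" .
    then show ?thesis using b x bc central[OF b(1) x] by (simp add: m_assoc)
  qed
  have coset: "N #> (x \<otimes> a) = N #> x" if "x \<in> carrier G" "a \<in> N" for x a
    using that central[OF that(2,1)] coset_mult_assoc[OF N.subset, of a x]
    by (simp add: N.rcos_const[OF is_group])
  have shift: "t (x \<otimes> a) = t x \<and> r (x \<otimes> a) = r x \<otimes> a" if "x \<in> carrier G" "a \<in> N" for x a
  proof -
    have "t (x \<otimes> a) = t x" unfolding t_def coset[OF that] ..
    moreover have "inv (t x) \<otimes> (x \<otimes> a) = inv (t x) \<otimes> x \<otimes> a"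
      using tr[OF that(1)] that N.mem_carrier by (simp add: m_assoc)
    ultimately show ?thesis unfolding r_def by simp
  qed
  have "t a \<in> N" if a: "a \<in> N" for a
  proof -
    obtain b where "b \<in> N" "t a = b \<otimes> a"
      using rcoset_some_elem[OF N N.mem_carrier[OF a]] unfolding t_def by blast
    then show ?thesis using a by simp
  qed
  with tr shift show ?thesis using that by blast
qed

lemma cocycle2_invariant_if_vanishing_on_central:
  assumes F: "cocycle2 G F"
    and central: "\<And>x. x \<in> carrier G \<Longrightarrow> a \<otimes> x = x \<otimes> a"
    and vanish: "\<And>x. x \<in> carrier G \<Longrightarrow> F x a = 0 \<and> F a x = 0"
    and a: "a \<in> carrier G" and x: "x \<in> carrier G" and y: "y \<in> carrier G"
  shows "F (a \<otimes> x) y = F x y \<and> F x (a \<otimes> y) = F x y"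
proof -
  have "F x y - F (a \<otimes> x) y + F a (x \<otimes> y) - F a x = 0"
    and "F a y - F (x \<otimes> a) y + F x (a \<otimes> y) - F x a = 0"
    using F a x y unfolding cocycle2_def by blast+
  then show ?thesis using vanish central x y by simp
qed

lemma cocycle2_descends_to_quotient:
  assumes N: "N \<lhd> G" and F: "cocycle2 G F"
    and invariant: "\<And>a x y. \<lbrakk>a \<in> N; x \<in> carrier G; y \<in> carrier G\<rbrakk>
      \<Longrightarrow> F (a \<otimes> x) y = F x y \<and> F x (a \<otimes> y) = F x y"
  obtains g where "cocycle2 (G Mod N) g"
    and "\<And>x y. \<lbrakk>x \<in> carrier G; y \<in> carrier G\<rbrakk> \<Longrightarrow> F x y = g (N #> x) (N #> y)"
proof -
  interpret N: normal N G by (rule N)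
  define g where "g U V = F (SOME x. x \<in> U) (SOME y. y \<in> V)" for U V
  have g: "g (N #> x) (N #> y) = F x y" if x: "x \<in> carrier G" and y: "y \<in> carrier G" for x y
  proof -
    obtain a where "a \<in> N" "(SOME z. z \<in> N #> x) = a \<otimes> x"
      using rcoset_some_elem[OF N.subgroup_axioms x] by blast
    moreover obtain b where "b \<in> N" "(SOME z. z \<in> N #> y) = b \<otimes> y"
      using rcoset_some_elem[OF N.subgroup_axioms y] by blast
    ultimately show ?thesis using invariant x y unfolding g_def by simp
  qed
  have "cocycle2 (G Mod N) g"
    unfolding cocycle2_def carrier_FactGroup mult_FactGroup
  proof (intro ballI)
    fix U V W assume "U \<in> (#>) N ` carrier G" "V \<in> (#>) N ` carrier G" "W \<in> (#>) N ` carrier G"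
    then obtain x y z where x: "x \<in> carrier G" "U = N #> x" and y: "y \<in> carrier G" "V = N #> y"
      and z: "z \<in> carrier G" "W = N #> z"
      by blast
    have "F y z - F (x \<otimes> y) z + F x (y \<otimes> z) - F x y = 0"
      using F x y z unfolding cocycle2_def by blast
    then show "g V W - g (U <#> V) W + g U (V <#> W) - g U V = 0"
      unfolding x(2) y(2) z(2) N.rcos_sum[OF x(1) y(1)] N.rcos_sum[OF y(1) z(1)]
      using g x(1) y(1) z(1) by simp
  qed
  then show ?thesis by (rule that[OF _ g[symmetric]])
qed

lemma inflated_cocycle2_symmetric:
  assumes N: "N \<lhd> G" and g: "cocycle2 (G Mod N) g"
    and x: "x \<in> carrier G" and a: "a \<in> N"
  shows "g (N #> x) (N #> a) = g (N #> a) (N #> x)"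
proof -
  interpret N: normal N G by (rule N)
  have Na: "N #> a = N" by (rule N.rcos_const[OF is_group a])
  have N1: "N #> \<one> = N" using N.subset by simp
  have Nx: "N #> x \<in> carrier (G Mod N)" and NN: "N \<in> carrier (G Mod N)"
    using x N1 by (auto simp: carrier_FactGroup)
  have "N #> x <#> N = N #> x" and "N <#> (N #> x) = N #> x" and "N <#> N = N"
    using N.rcos_sum[OF x one_closed] N.rcos_sum[OF one_closed x] N.rcos_sum[OF one_closed one_closed]
      x N.subset by simp_all
  moreover have "g N N - g (N #> x <#> N) N + g (N #> x) (N <#> N) - g (N #> x) N = 0"
    and "g N (N #> x) - g (N <#> N) (N #> x) + g N (N <#> (N #> x)) - g N N = 0"
    using g Nx NN unfolding cocycle2_def mult_FactGroup by blast+
  ultimately have "g (N #> x) N = g N N" and "g N (N #> x) = g N N"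
    by (simp_all add: algebra_simps)
  then show ?thesis by (simp add: Na)
qed

lemma cocycle2_cohomologous_vanishing_on_central:
  fixes f :: "'a \<Rightarrow> 'a \<Rightarrow> 'd::ab_group_add"
  assumes N: "subgroup N G" and central: "\<And>a x. \<lbrakk>a \<in> N; x \<in> carrier G\<rbrakk> \<Longrightarrow> a \<otimes> x = x \<otimes> a"
    and f: "cocycle2 G f"
    and vanish: "\<And>a b. \<lbrakk>a \<in> N; b \<in> N\<rbrakk> \<Longrightarrow> f a b = 0"
    and sym: "\<And>x a. \<lbrakk>x \<in> carrier G; a \<in> N\<rbrakk> \<Longrightarrow> f x a = f a x"
  obtains c where "\<And>x a. \<lbrakk>x \<in> carrier G; a \<in> N\<rbrakk>
    \<Longrightarrow> f x a - (c a - c (x \<otimes> a) + c x) = 0 \<and> f a x - (c x - c (a \<otimes> x) + c a) = 0"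
proof -
  interpret N: subgroup N G by (rule N)
  obtain t r where tr: "\<And>x. x \<in> carrier G \<Longrightarrow> t x \<in> carrier G \<and> r x \<in> N \<and> t x \<otimes> r x = x"
    and shift: "\<And>x a. \<lbrakk>x \<in> carrier G; a \<in> N\<rbrakk> \<Longrightarrow> t (x \<otimes> a) = t x \<and> r (x \<otimes> a) = r x \<otimes> a"
    and tN: "\<And>a. a \<in> N \<Longrightarrow> t a \<in> N"
    using central_subgroup_section[OF N central] by blast
  (* c (x \<otimes> a) = c x - f x a for a \<in> N: this cancels f on X \<times> N, and symmetry of f
     transfers the cancellation to N \<times> X. *)
  define c where "c x = - f (t x) (r x)" for x
  have c_shift: "c (x \<otimes> a) = c x - f x a" if x: "x \<in> carrier G" and a: "a \<in> N" for x a
  proof -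
    have tx: "t x \<in> carrier G" and rx: "r x \<in> N" and txrx: "t x \<otimes> r x = x"
      using tr[OF x] by auto
    have "f (r x) a - f (t x \<otimes> r x) a + f (t x) (r x \<otimes> a) - f (t x) (r x) = 0"
      using f tx N.mem_carrier[OF rx] N.mem_carrier[OF a] unfolding cocycle2_def by blast
    moreover have "f (r x) a = 0" using vanish[OF rx a] .
    ultimately show ?thesis using shift[OF x a] unfolding c_def txrx by (simp add: algebra_simps)
  qed
  have c_N: "c a = 0" if a: "a \<in> N" for a
  proof -
    have "r a \<in> N" using tr[OF N.mem_carrier[OF a]] by blast
    then show ?thesis unfolding c_def using vanish[OF tN[OF a]] by simp
  qed
  have "f x a - (c a - c (x \<otimes> a) + c x) = 0 \<and> f a x - (c x - c (a \<otimes> x) + c a) = 0"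
    if "x \<in> carrier G" "a \<in> N" for x a
    using c_shift[OF that] c_N[OF that(2)] central[OF that(2,1)] sym[OF that] by simp
  then show ?thesis using that by blast
qed

theorem inflation_iff_symmetric_on_central:
  fixes f :: "'a \<Rightarrow> 'a \<Rightarrow> 'd::ab_group_add"
  assumes N: "subgroup N G" and central: "\<And>a x. \<lbrakk>a \<in> N; x \<in> carrier G\<rbrakk> \<Longrightarrow> a \<otimes> x = x \<otimes> a"
    and f: "cocycle2 G f" and res: "coboundary2 (G\<lparr>carrier := N\<rparr>) f"
  shows "in_image_inflation G N f \<longleftrightarrow> (\<forall>x\<in>carrier G. \<forall>a\<in>N. f x a = f a x)"
proof
  have normal: "N \<lhd> G" by (rule central_subgroup_normal[OF N central])
  interpret N: normal N G by (rule normal)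
  show "\<forall>x\<in>carrier G. \<forall>a\<in>N. f x a = f a x" if infl: "in_image_inflation G N f"
  proof (intro ballI)
    fix x a assume x: "x \<in> carrier G" and a: "a \<in> N"
    obtain g c where g: "cocycle2 (G Mod N) g"
      and c: "\<forall>x\<in>carrier G. \<forall>y\<in>carrier G. f x y - g (N #> x) (N #> y) = c y - c (x \<otimes> y) + c x"
      using infl unfolding in_image_inflation_def cohomologous2_def coboundary2_def by blast
    have "f x a - g (N #> x) (N #> a) = f a x - g (N #> a) (N #> x)"
      using c[rule_format, OF x N.mem_carrier[OF a]] c[rule_format, OF N.mem_carrier[OF a] x] central[OF a x]
      by simp
    then show "f x a = f a x" using inflated_cocycle2_symmetric[OF normal g x a] by simp
  qed
  show "in_image_inflation G N f" if sym: "\<forall>x\<in>carrier G. \<forall>a\<in>N. f x a = f a x"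
  proof -
    obtain c0 where c0: "\<And>a b. \<lbrakk>a \<in> N; b \<in> N\<rbrakk> \<Longrightarrow> f a b = c0 b - c0 (a \<otimes> b) + c0 a"
      using res unfolding coboundary2_def by auto
    define f1 where "f1 x y = f x y - (c0 y - c0 (x \<otimes> y) + c0 x)" for x y
    have f1: "cocycle2 G f1" unfolding f1_def by (rule cocycle2_minus_coboundary[OF f])
    have f1_N: "f1 a b = 0" if "a \<in> N" "b \<in> N" for a b
      using c0[OF that] unfolding f1_def by simp
    have f1_sym: "f1 x a = f1 a x" if "x \<in> carrier G" "a \<in> N" for x a
      using sym that central[OF that(2,1)] unfolding f1_def by simp
    obtain c where c: "\<And>x a. \<lbrakk>x \<in> carrier G; a \<in> N\<rbrakk>
        \<Longrightarrow> f1 x a - (c a - c (x \<otimes> a) + c x) = 0 \<and> f1 a x - (c x - c (a \<otimes> x) + c a) = 0"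
      using cocycle2_cohomologous_vanishing_on_central[OF N central f1 f1_N f1_sym] by blast
    define F where "F x y = f1 x y - (c y - c (x \<otimes> y) + c x)" for x y
    have F: "cocycle2 G F" unfolding F_def by (rule cocycle2_minus_coboundary[OF f1])
    have "F (a \<otimes> x) y = F x y \<and> F x (a \<otimes> y) = F x y"
      if "a \<in> N" "x \<in> carrier G" "y \<in> carrier G" for a x y
      using cocycle2_invariant_if_vanishing_on_central[OF F _ _ N.mem_carrier[OF that(1)] that(2,3)]
        central c that(1) unfolding F_def by blast
    then obtain g where g: "cocycle2 (G Mod N) g"
      and Fg: "\<And>x y. \<lbrakk>x \<in> carrier G; y \<in> carrier G\<rbrakk> \<Longrightarrow> F x y = g (N #> x) (N #> y)"
      using cocycle2_descends_to_quotient[OF normal F] by blast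
    have "f x y - g (N #> x) (N #> y) = (c0 y + c y) - (c0 (x \<otimes> y) + c (x \<otimes> y)) + (c0 x + c x)"
      if "x \<in> carrier G" "y \<in> carrier G" for x y
      unfolding Fg[OF that, symmetric] F_def f1_def by (simp add: algebra_simps)
    then have "cohomologous2 G f (\<lambda>x y. g (N #> x) (N #> y))"
      unfolding cohomologous2_def coboundary2_def by (intro exI[of _ "\<lambda>x. c0 x + c x"]) blast
    then show ?thesis using g unfolding in_image_inflation_def by blast
  qed
qed

lemma symmetric_on_central_iff_factors:
  fixes f :: "'a \<Rightarrow> 'a \<Rightarrow> 'd::ab_group_add"
  assumes f: "cocycle2 G f"
    and N: "N \<subseteq> carrier G" and central: "\<And>a x. \<lbrakk>a \<in> N; x \<in> carrier G\<rbrakk> \<Longrightarrow> a \<otimes> x = x \<otimes> a"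
    and HK: "H <#> K = carrier G" and H: "H \<subseteq> carrier G" and K: "K \<subseteq> carrier G"
  shows "(\<forall>x\<in>carrier G. \<forall>a\<in>N. f x a = f a x)
    \<longleftrightarrow> (\<forall>x\<in>H. \<forall>a\<in>N. f x a = f a x) \<and> (\<forall>x\<in>K. \<forall>a\<in>N. f x a = f a x)"
proof (intro iffI conjI ballI)
  fix x a assume sym: "(\<forall>x\<in>H. \<forall>a\<in>N. f x a = f a x) \<and> (\<forall>x\<in>K. \<forall>a\<in>N. f x a = f a x)"
    and x: "x \<in> carrier G" and a: "a \<in> N"
  obtain h k where hk: "h \<in> H" "k \<in> K" "x = h \<otimes> k"
    using x HK unfolding set_mult_def by blast
  have "f x a - f a x = (f h a - f a h) + (f k a - f a k)"
    using cocycle2_commutator_mult[OF f _ central] hk H K N a by blast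
  then show "f x a = f a x" using sym hk a by simp
qed (use H K in blast)+

end

lemma (in group_hom) central_image:
  assumes onto: "h ` carrier G = carrier H" and N: "N \<subseteq> carrier G"
    and central: "\<And>a x. \<lbrakk>a \<in> N; x \<in> carrier G\<rbrakk> \<Longrightarrow> a \<otimes> x = x \<otimes> a"
    and b: "b \<in> h ` N" and y: "y \<in> carrier H"
  shows "b \<otimes>\<^bsub>H\<^esub> y = y \<otimes>\<^bsub>H\<^esub> b"
proof -
  obtain a x where a: "a \<in> N" "b = h a" and x: "x \<in> carrier G" "y = h x"
    using b y onto by blast
  have "b \<otimes>\<^bsub>H\<^esub> y = h (a \<otimes> x)" using a x N by auto
  also have "\<dots> = h (x \<otimes> a)" using central[OF a(1) x(1)] by simp
  also have "\<dots> = y \<otimes>\<^bsub>H\<^esub> b" using a x N by auto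
  finally show ?thesis .
qed

lemma (in group) central_product_FactGroup:
  assumes N: "N \<lhd> G" and H: "subgroup H G" and K: "subgroup K G"
    and HK: "H <#> K = carrier G" and commute: "\<forall>h\<in>H. \<forall>k\<in>K. h \<otimes> k = k \<otimes> h"
  shows "subgroup (qbar G N (H \<inter> K)) (G Mod N)"
    and "\<And>b y. \<lbrakk>b \<in> qbar G N (H \<inter> K); y \<in> carrier (G Mod N)\<rbrakk>
      \<Longrightarrow> b \<otimes>\<^bsub>G Mod N\<^esub> y = y \<otimes>\<^bsub>G Mod N\<^esub> b"
    and "qbar G N H <#>\<^bsub>G Mod N\<^esub> qbar G N K = carrier (G Mod N)"
    and "qbar G N H \<subseteq> carrier (G Mod N)" and "qbar G N K \<subseteq> carrier (G Mod N)"
proof -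
  interpret N: normal N G by (rule N)
  have hom: "(\<lambda>a. N #> a) \<in> hom G (G Mod N)" by (rule N.r_coset_hom_Mod)
  have "group_hom G (G Mod N) (\<lambda>a. N #> a)"
    unfolding group_hom_def group_hom_axioms_def using hom N.factorgroup_is_group is_group by blast
  then interpret \<pi>: group_hom G "G Mod N" "\<lambda>a. N #> a" .
  have onto: "(\<lambda>a. N #> a) ` carrier G = carrier (G Mod N)" by (simp add: carrier_FactGroup)
  have Hc: "H \<subseteq> carrier G" and Kc: "K \<subseteq> carrier G" using H K subgroup.subset by auto
  show "subgroup (qbar G N (H \<inter> K)) (G Mod N)"
    unfolding qbar_def by (rule \<pi>.subgroup_img_is_subgroup[OF subgroups_Inter_pair[OF H K]])
  show "b \<otimes>\<^bsub>G Mod N\<^esub> y = y \<otimes>\<^bsub>G Mod N\<^esub> b"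
    if "b \<in> qbar G N (H \<inter> K)" "y \<in> carrier (G Mod N)" for b y
  proof (rule \<pi>.central_image[OF onto _ central_product_inter_central[OF HK Hc Kc commute]])
    show "H \<inter> K \<subseteq> carrier G" using Hc by blast
  qed (use that in \<open>simp_all add: qbar_def\<close>)
  show "qbar G N H <#>\<^bsub>G Mod N\<^esub> qbar G N K = carrier (G Mod N)"
    using set_mult_hom[OF hom Hc Kc] HK onto unfolding qbar_def by simp
  show "qbar G N H \<subseteq> carrier (G Mod N)" and "qbar G N K \<subseteq> carrier (G Mod N)"
    using Hc Kc onto unfolding qbar_def by blast+
qed

lemma (in group) Zc_normal_in_central_product:
  assumes H: "subgroup H G" and K: "subgroup K G"
    and HK: "H <#> K = carrier G" and commute: "\<forall>h\<in>H. \<forall>k\<in>K. h \<otimes> k = k \<otimes> h"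
  shows "Zc G H K \<lhd> G"
proof (rule central_subgroup_normal)
  have Hc: "H \<subseteq> carrier G" and Kc: "K \<subseteq> carrier G" using H K subgroup.subset by auto
  show "subgroup (Zc G H K) G"
    unfolding Zc_def using subgroups_Inter_pair derived_is_subgroup Hc Kc by blast
  have "Zc G H K \<subseteq> H \<inter> K"
    unfolding Zc_def using derived_incl[OF subset_refl H] derived_incl[OF subset_refl K] by blast
  then show "a \<otimes> x = x \<otimes> a" if "a \<in> Zc G H K" "x \<in> carrier G" for a x
    using central_product_inter_central[OF HK Hc Kc commute] that by blast
qed

theorem proposition3p9:
  fixes G :: "('a, 'm) monoid_scheme" and H K :: "'a set"
    and f :: "'a set \<Rightarrow> 'a set \<Rightarrow> 'd::ab_group_add"
  assumes "group G"
    and "H \<lhd> G" and "K \<lhd> G"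
    and "H <#>\<^bsub>G\<^esub> K = carrier G"
    and "\<forall>h\<in>H. \<forall>k\<in>K. h \<otimes>\<^bsub>G\<^esub> k = k \<otimes>\<^bsub>G\<^esub> h"
    and "divisible_ab TYPE('d)"
    and "cocycle2 (G Mod Zc G H K) f"
    and "res_zero ((G Mod Zc G H K)\<lparr>carrier := qbar G (Zc G H K) H\<rparr>) (qbar G (Zc G H K) (H \<inter> K)) f
         \<or> res_zero ((G Mod Zc G H K)\<lparr>carrier := qbar G (Zc G H K) K\<rparr>) (qbar G (Zc G H K) (H \<inter> K)) f"
  shows "(in_image_inflation (G Mod Zc G H K) (qbar G (Zc G H K) (H \<inter> K)) f
           \<longleftrightarrow> hom_tensor_zero (qbar G (Zc G H K) H) (qbar G (Zc G H K) (H \<inter> K))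
                  (fst (mu_star (nu_map f)))
               \<and> hom_tensor_zero (qbar G (Zc G H K) K) (qbar G (Zc G H K) (H \<inter> K))
                  (snd (mu_star (nu_map f))))
       \<and> (hom_tensor_zero (qbar G (Zc G H K) H) (qbar G (Zc G H K) (H \<inter> K))
                  (fst (mu_star (nu_map f)))
               \<and> hom_tensor_zero (qbar G (Zc G H K) K) (qbar G (Zc G H K) (H \<inter> K))
                  (snd (mu_star (nu_map f)))
           \<longleftrightarrow> hom_tensor_zero (qbar G (Zc G H K) H) (qbar G (Zc G H K) (H \<inter> K)) (psi_map f)
               \<and> hom_tensor_zero (qbar G (Zc G H K) K) (qbar G (Zc G H K) (H \<inter> K)) (psi_map f))"
proof -
  let ?Q = "G Mod Zc G H K" and ?q = "qbar G (Zc G H K)"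
  interpret group G by (rule assms(1))
  have H: "subgroup H G" and K: "subgroup K G" using assms(2,3) normal_imp_subgroup by blast+
  have Z: "Zc G H K \<lhd> G" by (rule Zc_normal_in_central_product[OF H K assms(4,5)])
  note quotient = central_product_FactGroup[OF Z H K assms(4,5)]
  interpret Q: group ?Q by (rule normal.factorgroup_is_group[OF Z])
  have res: "coboundary2 (?Q\<lparr>carrier := ?q (H \<inter> K)\<rparr>) f"
    using assms(8) unfolding res_zero_def by auto
  have "in_image_inflation ?Q (?q (H \<inter> K)) f
      \<longleftrightarrow> (\<forall>x\<in>carrier ?Q. \<forall>a\<in>?q (H \<inter> K). f x a = f a x)"
    by (rule Q.inflation_iff_symmetric_on_central[OF quotient(1,2) assms(7) res])
  also have "\<dots> \<longleftrightarrow> (\<forall>x\<in>?q H. \<forall>a\<in>?q (H \<inter> K). f x a = f a x)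
      \<and> (\<forall>x\<in>?q K. \<forall>a\<in>?q (H \<inter> K). f x a = f a x)"
    by (rule Q.symmetric_on_central_iff_factors[OF assms(7) subgroup.subset[OF quotient(1)] quotient(2-5)])
  finally have inflation_iff: "in_image_inflation ?Q (?q (H \<inter> K)) f
      \<longleftrightarrow> (\<forall>x\<in>?q H. \<forall>a\<in>?q (H \<inter> K). f x a = f a x)
        \<and> (\<forall>x\<in>?q K. \<forall>a\<in>?q (H \<inter> K). f x a = f a x)" .
  have swap: "(\<forall>x\<in>?q K. \<forall>a\<in>?q (H \<inter> K). f a x = f x a)
      \<longleftrightarrow> (\<forall>x\<in>?q K. \<forall>a\<in>?q (H \<inter> K). f x a = f a x)"
    by auto
  show ?thesis
    unfolding hom_tensor_zero_def mu_star_def nu_map_def psi_map_def fst_conv snd_conv right_minus_eq swap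
    by (rule conjI[OF inflation_iff refl])
qed

end
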